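(* Let $t\in\frac{m+n}{2}+\mathbb Z$ and $s:=t+\frac{n-m}{2}-1\in\mathbb Z$. (a) In the non-exceptional case, $t$ satisfies $|t-\kappa|<L+\frac12$ (equivalently, by the characterization of critical numbers, $t\in\mathrm{Crit}$) if and only if $$\check\mu_{a_j}\ge\lambda_j-s\ge\check\mu_{1+a_j}\quad\text{for } j=1,\dots,m.\qquad(I_j)$$ (b) In the exceptional case, $t$ satisfies $|t-\kappa|<L+\frac12$ if and only if $s$ satisfies $(I_j)$ for all $j\neq\frac{m+1}{2}$ together with the middle condition $$\check\mu_{\frac{n-1}{2}}\ge\lambda_{\frac{m+1}{2}}-s\ge\check\mu_{\frac{n+3}{2}}-1\quad\text{if } k \text{ is even},$$ respectively $$\lambda_{\frac{m-1}{2}}\ge\check\mu_{\frac{n+1}{2}}+s\ge\lambda_{\frac{m+3}{2}}\quad\text{if } k \text{ is odd}.$$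
   Context: Let $n,m\ge1$, not both $1$. For $N\ge1$: $L_0^+(N):=\{(w,l)\in\mathbb Z\times\mathbb Z^N:\ l_1>\dots>l_N,\ l_i+l_{N+1-i}=0,\ w+l_i\equiv N+1 \bmod 2\}$; $X^+(N):=\{\mu\in\mathbb Z^N:\mu_1\ge\dots\ge\mu_N\}$; $X_0^+(N):=\{\mu\in X^+(N):\mu_i+\mu_{N+1-i}\text{ independent of } i\}$. Bijection $L_0^+(N)\to X_0^+(N)$: $(w,l)\mapsto\mu$, $\mu_i=\frac{w+l_i+2i-1-N}{2}$; inverse $w=\mu_1+\mu_N$, $l_i=2\mu_i+N+1-w-2i$. Let $\mu\in X_0^+(n)$, $\nu\in X_0^+(m)$ correspond to $(w,l)$, $(w',l')$. The dual weight is $\check\mu_i:=-\mu_{n+1-i}$. Put $\kappa:=\frac12(w+w'+1)$, $L_0:=\min\{|l_i-l'_j|: i\ne\frac{n+1}2\text{ or }j\ne\frac{m+1}2\}$, $L:=L_0/2$. The exceptional case: $n\equiv m\equiv1\bmod 2$. Standing assumptions: $l_1>l'_1$, and for every pair $(i,j)$ either $l_i\neq l'_j$ or ($n,m$ odd, $i=\frac{n+1}2$, $j=\frac{m+1}2$). Position tuple: $a_j\in\{1,\dots,n-1\}$ is the unique integer with $l_{a_j}>l'_j\ge l_{1+a_j}$, $j=1,\dots,m$. An index $j\in\{1,\dots,m-1\}$ is a jump index if $a_j<a_{j+1}$; $k$ is the number of jump indices. $\lambda_j:=\nu_j+a_j-j$. *)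

theory Defs
  imports Complex_Main
begin

text \<open>Weights are functions nat => int, only the values at indices 1..N matter.\<close>

definition X0plus :: "nat \<Rightarrow> (nat \<Rightarrow> int) \<Rightarrow> bool" where
  "X0plus N \<mu> \<longleftrightarrow> (\<forall>i\<in>{1..<N}. \<mu> (Suc i) \<le> \<mu> i) \<and>
     (\<forall>i\<in>{1..N}. \<forall>i'\<in>{1..N}. \<mu> i + \<mu> (N + 1 - i) = \<mu> i' + \<mu> (N + 1 - i'))"

definition wt :: "nat \<Rightarrow> (nat \<Rightarrow> int) \<Rightarrow> int" where
  "wt N \<mu> = \<mu> 1 + \<mu> N"

definition lt :: "nat \<Rightarrow> (nat \<Rightarrow> int) \<Rightarrow> nat \<Rightarrow> int" where
  "lt N \<mu> i = 2 * \<mu> i + int N + 1 - wt N \<mu> - 2 * int i"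

definition dualw :: "nat \<Rightarrow> (nat \<Rightarrow> int) \<Rightarrow> nat \<Rightarrow> int" where
  "dualw N \<mu> i = - \<mu> (N + 1 - i)"

definition kappa :: "nat \<Rightarrow> (nat \<Rightarrow> int) \<Rightarrow> nat \<Rightarrow> (nat \<Rightarrow> int) \<Rightarrow> real" where
  "kappa n \<mu> m \<nu> = (real_of_int (wt n \<mu>) + real_of_int (wt m \<nu>) + 1) / 2"

definition L0 :: "nat \<Rightarrow> (nat \<Rightarrow> int) \<Rightarrow> nat \<Rightarrow> (nat \<Rightarrow> int) \<Rightarrow> int" where
  "L0 n \<mu> m \<nu> = Min {\<bar>lt n \<mu> i - lt m \<nu> j\<bar> | i j.
      i \<in> {1..n} \<and> j \<in> {1..m} \<and> \<not> (2 * i = n + 1 \<and> 2 * j = m + 1)}"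

definition Lc :: "nat \<Rightarrow> (nat \<Rightarrow> int) \<Rightarrow> nat \<Rightarrow> (nat \<Rightarrow> int) \<Rightarrow> real" where
  "Lc n \<mu> m \<nu> = real_of_int (L0 n \<mu> m \<nu>) / 2"

definition apos :: "nat \<Rightarrow> (nat \<Rightarrow> int) \<Rightarrow> nat \<Rightarrow> (nat \<Rightarrow> int) \<Rightarrow> nat \<Rightarrow> nat" where
  "apos n \<mu> m \<nu> j = (THE a. a \<in> {1..n - 1} \<and> lt n \<mu> a > lt m \<nu> j \<and> lt m \<nu> j \<ge> lt n \<mu> (1 + a))"

definition kjumps :: "nat \<Rightarrow> (nat \<Rightarrow> int) \<Rightarrow> nat \<Rightarrow> (nat \<Rightarrow> int) \<Rightarrow> nat" where
  "kjumps n \<mu> m \<nu> = card {j \<in> {1..m - 1}. apos n \<mu> m \<nu> j < apos n \<mu> m \<nu> (j + 1)}"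

definition lam :: "nat \<Rightarrow> (nat \<Rightarrow> int) \<Rightarrow> nat \<Rightarrow> (nat \<Rightarrow> int) \<Rightarrow> nat \<Rightarrow> int" where
  "lam n \<mu> m \<nu> j = \<nu> j + int (apos n \<mu> m \<nu> j) - int j"

definition condI :: "nat \<Rightarrow> (nat \<Rightarrow> int) \<Rightarrow> nat \<Rightarrow> (nat \<Rightarrow> int) \<Rightarrow> int \<Rightarrow> nat \<Rightarrow> bool" where
  "condI n \<mu> m \<nu> s j \<longleftrightarrow>
     dualw n \<mu> (apos n \<mu> m \<nu> j) \<ge> lam n \<mu> m \<nu> j - s \<and>
     lam n \<mu> m \<nu> j - s \<ge> dualw n \<mu> (1 + apos n \<mu> m \<nu> j)"

end

theory Submission
  imports Defs
begin

(* Put X = 2(t - kappa), an integer with X - (l_i - l'_j) odd.  Then |t - kappa| < L + 1/2 says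
   |X| < |l_i - l'_j| for every pair with l_i \<noteq> l'_j; by the symmetries l_{n+1-i} = -l_i and
   l'_{m+1-j} = -l'_j this means that for each j the shifted value l'_j - X lies on the same side of
   every l_i as l'_j, i.e. in the same gap l_{1+a_j} < _ < l_{a_j} of the decreasing sequence l.
   Written out in mu and nu, this is (I_j).
   In the exceptional case l'_{j0} = 0 = l_{i0} for the middle indices, and the middle column
   contributes |X| < l_{i0-1} instead.  For even k this is the stated middle condition.  For odd k,
   the reflection j \<mapsto> m - j of the jump indices forces a_{j0-1} = i0 - 1, and then (I_{j0-1}) and
   (I_{j0+1}) already give |X| < l'_{j0-1} < l_{i0-1}, which is also equivalent to the stated
   middle condition. *)

lemma even_card_involution:
  fixes f :: "'a \<Rightarrow> 'a"
  assumes "finite J"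
    and "\<And>x. x \<in> J \<Longrightarrow> f x \<in> J" and "\<And>x. x \<in> J \<Longrightarrow> f (f x) = x"
    and "\<And>x. x \<in> J \<Longrightarrow> f x \<noteq> x"
  shows "even (card J)"
  using assms
proof (induction J rule: finite_psubset_induct)
  case (psubset J)
  show ?case
  proof (cases "J = {}")
    case False
    then obtain x where x: "x \<in> J" by blast
    define J' where "J' = J - {x, f x}"
    have sub: "J' \<subset> J" using x unfolding J'_def by blast
    have closed: "f y \<in> J'" if "y \<in> J'" for y
    proof -
      have "y \<in> J" "y \<noteq> x" "y \<noteq> f x" using that unfolding J'_def by auto
      then show ?thesis using psubset.prems(1,2) x unfolding J'_def by (metis DiffI empty_iff insertE)
    qed
    have "even (card J')"
      by (rule psubset.IH[OF sub]) (use sub closed psubset.prems in auto)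
    moreover have "card J = card J' + 2"
    proof -
      have pair: "{x, f x} \<subseteq> J" "card {x, f x} = 2"
        using x psubset.prems(1)[OF x] psubset.prems(3)[OF x] by auto
      then show ?thesis
        using card_mono[OF psubset.hyps pair(1)] unfolding J'_def by (simp add: card_Diff_subset)
    qed
    ultimately show ?thesis by simp
  qed simp
qed

lemma antimono_gap_ex1:
  fixes l :: "nat \<Rightarrow> 'a::linorder"
  assumes anti: "antimono_on {1..n} l" and "1 \<le> n" and "c < l 1" and "l n \<le> c"
  shows "\<exists>!a. a \<in> {1..n-1} \<and> c < l a \<and> l (1 + a) \<le> c"
proof (rule ex_ex1I)
  define S where "S = {i \<in> {1..n}. c < l i}"
  define a where "a = Max S"
  have "finite S" "1 \<in> S" "n \<notin> S" using assms unfolding S_def by auto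
  then have "a \<in> S" "1 + a \<notin> S" unfolding a_def by (auto intro: Max_in dest: Max_ge)
  with \<open>n \<notin> S\<close> show "\<exists>a. a \<in> {1..n-1} \<and> c < l a \<and> l (1 + a) \<le> c"
    unfolding S_def by (auto simp: le_less)
next
  fix a b
  assume a: "a \<in> {1..n-1} \<and> c < l a \<and> l (1 + a) \<le> c"
     and b: "b \<in> {1..n-1} \<and> c < l b \<and> l (1 + b) \<le> c"
  have no_gap_below: False
    if "x < y" "x \<in> {1..n-1}" "y \<in> {1..n-1}" "l (1 + x) \<le> c" "c < l y" for x y
  proof -
    have "1 + x \<in> {1..n}" "y \<in> {1..n}" using that by auto
    then have "l y \<le> l (1 + x)" using monotone_onD[OF anti] \<open>x < y\<close> by simp
    then show False using that by simp
  qed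
  show "a = b" using no_gap_below[of a b] no_gap_below[of b a] a b by (cases a b rule: linorder_cases) auto
qed

lemma antimono_above_gap_iff:
  fixes l :: "nat \<Rightarrow> 'a::linorder"
  assumes anti: "antimono_on {1..n} l" and "a \<in> {1..n-1}" and "l (1 + a) \<le> c" and "c < l a"
  shows "(\<forall>i\<in>{1..n}. c < l i \<longrightarrow> y < l i) \<longleftrightarrow> y < l a"
proof -
  have "l a \<le> l i" if "i \<in> {1..n}" "c < l i" for i
  proof -
    have "i \<le> a" using monotone_onD[OF anti, of "1 + a" i] that assms by fastforce
    then show ?thesis using monotone_onD[OF anti, of i a] that assms by auto
  qed
  then show ?thesis using assms by fastforce
qed

lemma antimono_below_gap_iff:
  fixes l :: "nat \<Rightarrow> 'a::linorder"
  assumes anti: "antimono_on {1..n} l" and "a \<in> {1..n-1}" and "l (1 + a) < c" and "c \<le> l a"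
  shows "(\<forall>i\<in>{1..n}. l i < c \<longrightarrow> l i < y) \<longleftrightarrow> l (1 + a) < y"
proof -
  have "l i \<le> l (1 + a)" if "i \<in> {1..n}" "l i < c" for i
  proof -
    have "a < i" using monotone_onD[OF anti, of i a] that assms by fastforce
    then show ?thesis using monotone_onD[OF anti, of "1 + a" i] that assms by auto
  qed
  then show ?thesis using assms by fastforce
qed

lemma X0plus_antimono:
  assumes "X0plus N \<mu>"
  shows "antimono_on {1..N} \<mu>"
proof (rule monotone_onI)
  fix i i' assume i: "i \<in> {1..N}" and "i' \<in> {1..N}" "i \<le> i'"
  from \<open>i \<le> i'\<close> \<open>i' \<in> {1..N}\<close> show "\<mu> i' \<le> \<mu> i"
  proof (induction i' rule: dec_induct)
    case (step k)
    then have "\<mu> (Suc k) \<le> \<mu> k" using assms i unfolding X0plus_def by auto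
    moreover have "\<mu> k \<le> \<mu> i" using step i by simp
    ultimately show ?case by simp
  qed simp
qed

lemma lt_strict_antimono:
  assumes "X0plus N \<mu>"
  shows "strict_antimono_on {1..N} (lt N \<mu>)"
  using monotone_onD[OF X0plus_antimono[OF assms]]
  by (intro monotone_onI) (fastforce simp: lt_def)

lemma lt_antimono:
  assumes "X0plus N \<mu>"
  shows "antimono_on {1..N} (lt N \<mu>)"
  using lt_strict_antimono[OF assms] strict_antimono_iff_antimono by blast

lemma X0plus_sym:
  assumes "X0plus N \<mu>" and "i \<in> {1..N}"
  shows "\<mu> i + \<mu> (N + 1 - i) = wt N \<mu>"
proof -
  have "1 \<in> {1..N}" using assms(2) by simp
  then have "\<mu> i + \<mu> (N + 1 - i) = \<mu> 1 + \<mu> (N + 1 - 1)"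
    using assms unfolding X0plus_def by blast
  then show ?thesis unfolding wt_def by simp
qed

lemma lt_reflect:
  assumes "X0plus N \<mu>" and "i \<in> {1..N}"
  shows "lt N \<mu> (N + 1 - i) = - lt N \<mu> i"
  using X0plus_sym[OF assms] assms(2) unfolding lt_def by (simp add: of_nat_diff)

lemma dualw_eq:
  assumes "X0plus N \<mu>" and "i \<in> {1..N}"
  shows "dualw N \<mu> i = \<mu> i - wt N \<mu>"
  using X0plus_sym[OF assms] unfolding dualw_def by simp

locale weight_pair =
  fixes n m :: nat and \<mu> \<nu> :: "nat \<Rightarrow> int"
  assumes n_pos: "1 \<le> n" and m_pos: "1 \<le> m"
    and X0plus_\<mu>: "X0plus n \<mu>" and X0plus_\<nu>: "X0plus m \<nu>"
    and lt_first: "lt m \<nu> 1 < lt n \<mu> 1"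
    and lt_distinct: "\<forall>i\<in>{1..n}. \<forall>j\<in>{1..m}. lt n \<mu> i \<noteq> lt m \<nu> j \<or>
           (odd n \<and> odd m \<and> 2 * i = n + 1 \<and> 2 * j = m + 1)"
begin

abbreviation l where "l \<equiv> lt n \<mu>"
abbreviation l' where "l' \<equiv> lt m \<nu>"
abbreviation a where "a \<equiv> apos n \<mu> m \<nu>"

lemma l_antimono: "antimono_on {1..n} l"
  using lt_antimono[OF X0plus_\<mu>] .

lemma l'_antimono: "antimono_on {1..m} l'"
  using lt_antimono[OF X0plus_\<nu>] .

lemma l_reflect: "i \<in> {1..n} \<Longrightarrow> l (n + 1 - i) = - l i"
  using lt_reflect[OF X0plus_\<mu>] .

lemma l'_reflect: "j \<in> {1..m} \<Longrightarrow> l' (m + 1 - j) = - l' j"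
  using lt_reflect[OF X0plus_\<nu>] .

lemma l'_between: "j \<in> {1..m} \<Longrightarrow> - l' 1 \<le> l' j \<and> l' j \<le> l' 1"
  using monotone_onD[OF l'_antimono, of 1 j] monotone_onD[OF l'_antimono, of j m]
    l'_reflect[of 1] m_pos by auto

lemma two_le_n: "2 \<le> n"
proof (rule ccontr)
  assume "\<not> 2 \<le> n"
  then have "n = 1" using n_pos by simp
  then have "l 1 = 0" using l_reflect[of 1] by simp
  then show False using l'_between[of 1] lt_first m_pos by simp
qed

lemma column_in_range: "j \<in> {1..m} \<Longrightarrow> l' j < l 1 \<and> l n \<le> l' j"
  using l'_between lt_first l_reflect[of 1] n_pos by fastforce

lemma apos_gap:
  assumes "j \<in> {1..m}"
  shows "a j \<in> {1..n-1}" and "l' j < l (a j)" and "l (1 + a j) \<le> l' j"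
  using theI'[OF antimono_gap_ex1[OF l_antimono n_pos]] column_in_range[OF assms]
  unfolding apos_def by auto

lemma apos_eqI:
  assumes "j \<in> {1..m}" and "i \<in> {1..n-1}" and "l' j < l i" and "l (1 + i) \<le> l' j"
  shows "a j = i"
  unfolding apos_def
  using the1_equality[OF antimono_gap_ex1[OF l_antimono n_pos]] column_in_range[OF assms(1)] assms(2-)
  by blast

lemma lt_eq_iff_middle:
  assumes "i \<in> {1..n}" and "j \<in> {1..m}"
  shows "l i = l' j \<longleftrightarrow> 2 * i = n + 1 \<and> 2 * j = m + 1"
proof
  assume "2 * i = n + 1 \<and> 2 * j = m + 1"
  then have "n + 1 - i = i" "m + 1 - j = j" by auto
  then show "l i = l' j" using l_reflect[OF assms(1)] l'_reflect[OF assms(2)] by simp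
qed (use lt_distinct assms in blast)

definition offset :: "int \<Rightarrow> int" where
  "offset s = 2 * s - int n + int m + 1 - wt n \<mu> - wt m \<nu>"

lemma odd_offset_diff: "odd (l' j - offset s - l i)"
proof -
  have "l' j - offset s - l i = 2 * (\<nu> j - int j - s + wt n \<mu> - \<mu> i + int i) - 1"
    unfolding lt_def offset_def by (simp add: algebra_simps)
  then show ?thesis by simp
qed

lemma offset_le_L0_iff:
  "\<bar>offset s\<bar> \<le> L0 n \<mu> m \<nu> \<longleftrightarrow>
     (\<forall>i\<in>{1..n}. \<forall>j\<in>{1..m}. l i \<noteq> l' j \<longrightarrow> \<bar>offset s\<bar> < \<bar>l i - l' j\<bar>)"
proof -
  define P where "P = {\<bar>l i - l' j\<bar> | i j.
      i \<in> {1..n} \<and> j \<in> {1..m} \<and> \<not> (2 * i = n + 1 \<and> 2 * j = m + 1)}"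
  have "finite P"
    by (rule finite_subset[of _ "(\<lambda>(i, j). \<bar>l i - l' j\<bar>) ` ({1..n} \<times> {1..m})"])
       (auto simp: P_def)
  moreover have "P \<noteq> {}" using two_le_n m_pos unfolding P_def by fastforce
  ultimately have "\<bar>offset s\<bar> \<le> L0 n \<mu> m \<nu> \<longleftrightarrow> (\<forall>d\<in>P. \<bar>offset s\<bar> \<le> d)"
    unfolding L0_def P_def[symmetric] by (rule Min_ge_iff)
  moreover have "\<bar>offset s\<bar> \<noteq> \<bar>l i - l' j\<bar>" for i j
  proof -
    have "offset s \<noteq> l' j - l i" "offset s \<noteq> l i - l' j"
      using odd_offset_diff[of j s i] by presburger+
    then show ?thesis by (auto simp: abs_eq_iff)
  qed
  ultimately show ?thesis using lt_eq_iff_middle unfolding P_def by fastforce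
qed

definition uncrossed :: "nat \<Rightarrow> int \<Rightarrow> bool" where
  "uncrossed j s \<longleftrightarrow> (\<forall>i\<in>{1..n}.
     (l' j < l i \<longrightarrow> l' j - offset s < l i) \<and> (l i < l' j \<longrightarrow> l i < l' j - offset s))"

lemma offset_le_L0_iff_uncrossed:
  "\<bar>offset s\<bar> \<le> L0 n \<mu> m \<nu> \<longleftrightarrow> (\<forall>j\<in>{1..m}. uncrossed j s)"
  unfolding offset_le_L0_iff
proof
  assume "\<forall>i\<in>{1..n}. \<forall>j\<in>{1..m}. l i \<noteq> l' j \<longrightarrow> \<bar>offset s\<bar> < \<bar>l i - l' j\<bar>"
  then show "\<forall>j\<in>{1..m}. uncrossed j s" unfolding uncrossed_def by fastforce
next
  assume uc: "\<forall>j\<in>{1..m}. uncrossed j s"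
  show "\<forall>i\<in>{1..n}. \<forall>j\<in>{1..m}. l i \<noteq> l' j \<longrightarrow> \<bar>offset s\<bar> < \<bar>l i - l' j\<bar>"
  proof (intro ballI impI)
    fix i j assume ij: "i \<in> {1..n}" "j \<in> {1..m}" and "l i \<noteq> l' j"
    have reflected: "n + 1 - i \<in> {1..n}" "m + 1 - j \<in> {1..m}" using ij by auto
    have "l' j < l i \<longrightarrow> l' j - offset s < l i" "l i < l' j \<longrightarrow> l i < l' j - offset s"
      using uc ij unfolding uncrossed_def by auto
    \<comment> \<open>the reflected pair supplies the bound of the opposite sign\<close>
    moreover have "uncrossed (m + 1 - j) s" using uc reflected(2) by blast
    then have "(l' (m + 1 - j) < l (n + 1 - i) \<longrightarrow> l' (m + 1 - j) - offset s < l (n + 1 - i)) \<and>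
        (l (n + 1 - i) < l' (m + 1 - j) \<longrightarrow> l (n + 1 - i) < l' (m + 1 - j) - offset s)"
      using reflected(1) unfolding uncrossed_def by blast
    then have "(- l' j < - l i \<longrightarrow> - l' j - offset s < - l i) \<and>
        (- l i < - l' j \<longrightarrow> - l i < - l' j - offset s)"
      unfolding l_reflect[OF ij(1)] l'_reflect[OF ij(2)] .
    ultimately show "\<bar>offset s\<bar> < \<bar>l i - l' j\<bar>" using \<open>l i \<noteq> l' j\<close> by linarith
  qed
qed

lemma condI_iff:
  assumes "j \<in> {1..m}"
  shows "condI n \<mu> m \<nu> s j \<longleftrightarrow> l (1 + a j) < l' j - offset s \<and> l' j - offset s < l (a j)"
proof -
  have "a j \<in> {1..n}" "1 + a j \<in> {1..n}" using apos_gap(1)[OF assms] by auto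
  then show ?thesis
    unfolding condI_def lam_def dualw_eq[OF X0plus_\<mu> \<open>a j \<in> {1..n}\<close>]
      dualw_eq[OF X0plus_\<mu> \<open>1 + a j \<in> {1..n}\<close>] lt_def offset_def
    by auto
qed

lemma uncrossed_iff_condI:
  assumes "j \<in> {1..m}" and "l (1 + a j) \<noteq> l' j"
  shows "uncrossed j s \<longleftrightarrow> condI n \<mu> m \<nu> s j"
proof -
  have "l (1 + a j) < l' j" using apos_gap(3)[OF assms(1)] assms(2) by simp
  then show ?thesis
    unfolding uncrossed_def condI_iff[OF assms(1)] ball_conj_distrib
    using antimono_above_gap_iff[OF l_antimono apos_gap(1,3,2)[OF assms(1)]]
      antimono_below_gap_iff[OF l_antimono apos_gap(1)[OF assms(1)]] apos_gap(2)[OF assms(1)]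
    by auto
qed

theorem offset_le_L0_iff_condI:
  assumes "\<not> (odd n \<and> odd m)"
  shows "\<bar>offset s\<bar> \<le> L0 n \<mu> m \<nu> \<longleftrightarrow> (\<forall>j\<in>{1..m}. condI n \<mu> m \<nu> s j)"
proof -
  have "l (1 + a j) \<noteq> l' j" if "j \<in> {1..m}" for j
    using lt_distinct apos_gap(1)[OF that] that assms by fastforce
  then show ?thesis unfolding offset_le_L0_iff_uncrossed using uncrossed_iff_condI by blast
qed

lemma apos_reflect:
  assumes "j \<in> {1..m}" and "l (1 + a j) \<noteq> l' j"
  shows "a (m + 1 - j) = n - a j"
proof (rule apos_eqI)
  have gap: "a j \<in> {1..n-1}" "l' j < l (a j)" "l (1 + a j) < l' j"
    using apos_gap[OF assms(1)] assms(2) by auto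
  then have "l (n - a j) = - l (1 + a j)" "l (1 + (n - a j)) = - l (a j)"
    using l_reflect[of "1 + a j"] l_reflect[of "a j"] by (auto simp: Suc_diff_le)
  then show "l' (m + 1 - j) < l (n - a j)" "l (1 + (n - a j)) \<le> l' (m + 1 - j)"
    using gap l'_reflect[OF assms(1)] by auto
  show "m + 1 - j \<in> {1..m}" "n - a j \<in> {1..n-1}" using assms(1) gap(1) by auto
qed

end

locale exceptional_pair = weight_pair +
  assumes n_odd: "odd n" and m_odd: "odd m"
begin

abbreviation i0 where "i0 \<equiv> (n + 1) div 2"
abbreviation j0 where "j0 \<equiv> (m + 1) div 2"

lemma i0_range: "2 * i0 = n + 1" "2 \<le> i0" "i0 + 1 \<le> n"
  using n_odd two_le_n by presburger+

lemma j0_range: "2 * j0 = m + 1" "j0 \<in> {1..m}"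
proof -
  show "2 * j0 = m + 1" using m_odd by presburger
  then show "j0 \<in> {1..m}" using m_pos by simp
qed

lemma i0_indices: "i0 - 1 \<in> {1..n-1}" "i0 \<in> {1..n-1}" "1 + i0 \<in> {1..n}" "1 + (i0 - 1) = i0"
  using i0_range by auto

lemma l_i0: "l i0 = 0"
proof -
  have "n + 1 - i0 = i0" using i0_range(1) by linarith
  then show ?thesis using l_reflect[of i0] i0_indices(2) by simp
qed

lemma l'_j0: "l' j0 = 0"
proof -
  have "m + 1 - j0 = j0" using j0_range(1) by linarith
  then show ?thesis using l'_reflect[OF j0_range(2)] by simp
qed

lemma l_around_i0: "0 < l (i0 - 1)" "l (1 + i0) = - l (i0 - 1)"
proof -
  have "i0 - 1 < i0" using i0_range by linarith
  then show "0 < l (i0 - 1)"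
    using monotone_onD[OF lt_strict_antimono[OF X0plus_\<mu>], of "i0 - 1" i0] i0_indices l_i0 by simp
  have "n + 1 - (i0 - 1) = 1 + i0" using i0_range by linarith
  then show "l (1 + i0) = - l (i0 - 1)" using l_reflect[of "i0 - 1"] i0_indices by simp
qed

lemma apos_j0: "a j0 = i0 - 1"
  using apos_eqI[OF j0_range(2) i0_indices(1)] i0_indices(4) l_i0 l'_j0 l_around_i0 by simp

lemma uncrossed_j0_iff: "uncrossed j0 s \<longleftrightarrow> \<bar>offset s\<bar> < l (i0 - 1)"
proof -
  have "(\<forall>i\<in>{1..n}. 0 < l i \<longrightarrow> - offset s < l i) \<longleftrightarrow> - offset s < l (i0 - 1)"
    using antimono_above_gap_iff[OF l_antimono i0_indices(1)] i0_indices(4) l_i0 l_around_i0 by simp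
  moreover have "(\<forall>i\<in>{1..n}. l i < 0 \<longrightarrow> l i < - offset s) \<longleftrightarrow> l (1 + i0) < - offset s"
    using antimono_below_gap_iff[OF l_antimono i0_indices(2)] l_i0 l_around_i0 by simp
  ultimately show ?thesis
    unfolding uncrossed_def l'_j0 ball_conj_distrib using l_around_i0(2) by (auto simp: abs_less_iff)
qed

lemma l_apos_succ_neq:
  assumes "j \<in> {1..m}" and "j \<noteq> j0"
  shows "l (1 + a j) \<noteq> l' j"
proof -
  have "1 + a j \<in> {1..n}" using apos_gap(1)[OF assms(1)] by auto
  then show ?thesis using lt_eq_iff_middle[OF _ assms(1)] assms(2) j0_range(1) by auto
qed

lemma offset_le_L0_iff_exceptional:
  "\<bar>offset s\<bar> \<le> L0 n \<mu> m \<nu> \<longleftrightarrow>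
     (\<forall>j\<in>{1..m}. j \<noteq> j0 \<longrightarrow> condI n \<mu> m \<nu> s j) \<and> \<bar>offset s\<bar> < l (i0 - 1)"
proof -
  have regular: "uncrossed j s \<longleftrightarrow> condI n \<mu> m \<nu> s j" if "j \<in> {1..m}" "j \<noteq> j0" for j
    using uncrossed_iff_condI[OF that(1) l_apos_succ_neq[OF that]] .
  have split: "(\<forall>j\<in>{1..m}. uncrossed j s) \<longleftrightarrow>
      (\<forall>j\<in>{1..m}. j \<noteq> j0 \<longrightarrow> uncrossed j s) \<and> uncrossed j0 s"
    using j0_range(2) by auto
  show ?thesis
    unfolding offset_le_L0_iff_uncrossed split uncrossed_j0_iff using regular by auto
qed

lemma even_middle_condition_iff:
  "dualw n \<mu> ((n - 1) div 2) \<ge> lam n \<mu> m \<nu> j0 - s \<and>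
   lam n \<mu> m \<nu> j0 - s \<ge> dualw n \<mu> ((n + 3) div 2) - 1
   \<longleftrightarrow> \<bar>offset s\<bar> < l (i0 - 1)"
proof -
  have idx: "(n - 1) div 2 = i0 - 1" "(n + 3) div 2 = 1 + i0" "i0 - 1 \<in> {1..n}"
    using n_odd i0_indices by (presburger, presburger, auto)
  have "int (i0 - 1) = int i0 - 1" "2 * int i0 = int n + 1" "2 * int j0 = int m + 1"
    using i0_range j0_range by linarith+
  then show ?thesis
    using l'_j0 l_around_i0
    unfolding idx(1,2) dualw_eq[OF X0plus_\<mu> idx(3)] dualw_eq[OF X0plus_\<mu> i0_indices(3)]
      lam_def apos_j0 lt_def offset_def
    by (auto simp: abs_less_iff)
qed

lemma jump_reflect:
  assumes "j \<in> {1..m-1}" and "j \<noteq> j0 - 1" and "j \<noteq> j0"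
  shows "a j < a (j + 1) \<longleftrightarrow> a (m - j) < a (m - j + 1)"
proof -
  have "j \<in> {1..m}" "j + 1 \<in> {1..m}" "j + 1 \<noteq> j0" using assms by auto
  then have "a (m - j) = n - a (j + 1)" "a (m - j + 1) = n - a j"
    using apos_reflect[of "j + 1"] apos_reflect[of j] l_apos_succ_neq assms(3) by (auto simp: Suc_diff_le)
  moreover have "a j < n" "a (j + 1) < n"
    using apos_gap(1) \<open>j \<in> {1..m}\<close> \<open>j + 1 \<in> {1..m}\<close> by fastforce+
  ultimately show ?thesis by auto
qed

lemma j0_neighbours:
  assumes "3 \<le> m"
  shows "j0 - 1 \<in> {1..m}" "j0 + 1 \<in> {1..m}" "m - (j0 - 1) = j0"
    and "0 < l' (j0 - 1)" "l' (j0 + 1) = - l' (j0 - 1)" "a (j0 + 1) = n - a (j0 - 1)"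
proof -
  have "2 * j0 = m + 1" by (fact j0_range(1))
  then have nb: "j0 - 1 \<in> {1..m}" "j0 + 1 \<in> {1..m}" "m + 1 - (j0 - 1) = j0 + 1"
      "m - (j0 - 1) = j0" "j0 - 1 < j0"
    using assms by simp_all linarith+
  then show "j0 - 1 \<in> {1..m}" "j0 + 1 \<in> {1..m}" "m - (j0 - 1) = j0" by simp_all
  show "0 < l' (j0 - 1)"
    using monotone_onD[OF lt_strict_antimono[OF X0plus_\<nu>], of "j0 - 1" j0] nb j0_range(2) l'_j0
    by simp
  show "l' (j0 + 1) = - l' (j0 - 1)" using l'_reflect[OF nb(1)] unfolding nb(3) .
  show "a (j0 + 1) = n - a (j0 - 1)"
    using apos_reflect[OF nb(1) l_apos_succ_neq[OF nb(1)]] nb(3,5) by simp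
qed

lemma apos_j0_succ:
  assumes "3 \<le> m" and "a (j0 - 1) = i0 - 1"
  shows "a (j0 + 1) = i0"
proof -
  have "n - (i0 - 1) = i0" using i0_range(1,2) by linarith
  then show ?thesis using j0_neighbours(6)[OF assms(1)] assms(2) by simp
qed

lemma apos_j0_pred_le:
  assumes "3 \<le> m"
  shows "a (j0 - 1) \<le> i0 - 1"
proof -
  note nb = j0_neighbours[OF assms]
  have "l' (j0 - 1) < l (a (j0 - 1))" "a (j0 - 1) \<in> {1..n-1}" using apos_gap[OF nb(1)] by auto
  then have "a (j0 - 1) < i0"
    using monotone_onD[OF l_antimono, of i0 "a (j0 - 1)"] nb(4) l_i0 i0_indices(2) by fastforce
  then show ?thesis by linarith
qed

text \<open>If \<open>a (j0 - 1) < a j0\<close>, then both \<open>j0 - 1\<close> and \<open>j0\<close> are jump indices, and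
  \<open>j \<mapsto> m - j\<close> is a fixed-point free involution of the jump indices.\<close>

lemma even_kjumps:
  assumes "3 \<le> m" and below: "a (j0 - 1) < i0 - 1"
  shows "even (kjumps n \<mu> m \<nu>)"
proof -
  define J where "J = {j \<in> {1..m - 1}. a j < a (j + 1)}"
  note nb = j0_neighbours[OF assms(1)]
  have "2 * j0 = m + 1" "2 * i0 = n + 1" "2 \<le> i0" by (fact j0_range(1) i0_range(1,2))+
  then have idx: "j0 - 1 + 1 = j0" "j0 - 1 \<in> {1..m-1}" "j0 \<in> {1..m-1}"
    using assms(1) by auto
  have "i0 - 1 < n - a (j0 - 1)" using below \<open>2 * i0 = n + 1\<close> by linarith
  then have middle_jumps: "j0 - 1 \<in> J" "j0 \<in> J"
    unfolding J_def mem_Collect_eq idx(1) apos_j0 nb(6) using idx(2,3) below by blast+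
  have reflect: "m - j \<in> J" if "j \<in> J" for j
  proof -
    have j: "j \<in> {1..m-1}" "a j < a (j + 1)" using that unfolding J_def by auto
    consider "j = j0 - 1" | "j = j0" | "j \<noteq> j0 - 1" "j \<noteq> j0" by blast
    then show ?thesis
    proof cases
      case 1
      then show ?thesis using middle_jumps(2) nb(3) by simp
    next
      case 2
      then have "m - j = j0 - 1" using j0_range(1) by linarith
      then show ?thesis using middle_jumps(1) by simp
    next
      case 3
      then show ?thesis using j jump_reflect[of j] unfolding J_def by auto
    qed
  qed
  have "even (card J)"
  proof (rule even_card_involution[of J "\<lambda>j. m - j"])
    show "finite J" unfolding J_def by simp
    show "m - (m - j) = j" "m - j \<noteq> j" if "j \<in> J" for j
      using that m_odd unfolding J_def by (auto, presburger)
  qed (fact reflect)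
  then show ?thesis unfolding kjumps_def J_def .
qed

lemma odd_kjumps_middle:
  assumes "odd (kjumps n \<mu> m \<nu>)"
  shows "3 \<le> m \<and> a (j0 - 1) = i0 - 1"
proof -
  have "3 \<le> m"
  proof (rule ccontr)
    assume "\<not> 3 \<le> m"
    then have "m = 1" using m_odd m_pos by presburger
    then show False using assms unfolding kjumps_def by simp
  qed
  moreover have "a (j0 - 1) = i0 - 1"
    using apos_j0_pred_le[OF \<open>3 \<le> m\<close>] even_kjumps[OF \<open>3 \<le> m\<close>] assms by fastforce
  ultimately show ?thesis ..
qed

lemma odd_middle_condition_iff:
  assumes "3 \<le> m" and "a (j0 - 1) = i0 - 1"
  shows "lam n \<mu> m \<nu> ((m - 1) div 2) \<ge> dualw n \<mu> ((n + 1) div 2) + s \<and>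
    dualw n \<mu> ((n + 1) div 2) + s \<ge> lam n \<mu> m \<nu> ((m + 3) div 2)
    \<longleftrightarrow> \<bar>offset s\<bar> < l' (j0 - 1)"
proof -
  note nb = j0_neighbours[OF assms(1)]
  have idx: "(m - 1) div 2 = j0 - 1" "(m + 3) div 2 = j0 + 1" "i0 \<in> {1..n}" "m + 1 - (j0 - 1) = j0 + 1"
    using m_odd i0_indices nb(3) by (presburger, presburger, auto)
  have "n + 1 - i0 = i0" using i0_range(1) by linarith
  then have "\<nu> (j0 - 1) + \<nu> (j0 + 1) = wt m \<nu>" "2 * \<mu> i0 = wt n \<mu>"
    using X0plus_sym[OF X0plus_\<nu> nb(1)] X0plus_sym[OF X0plus_\<mu> idx(3)] idx(4) by simp_all
  moreover have "int (i0 - 1) = int i0 - 1" "int (j0 - 1) = int j0 - 1"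
    "2 * int i0 = int n + 1" "2 * int j0 = int m + 1"
    using i0_range j0_range assms(1) by linarith+
  ultimately show ?thesis
    unfolding idx(1,2) dualw_eq[OF X0plus_\<mu> idx(3)] lam_def assms(2) apos_j0_succ[OF assms]
      lt_def offset_def abs_less_iff
    by linarith
qed

lemma offset_bound_of_condI_j0_neighbours:
  assumes "3 \<le> m" and "a (j0 - 1) = i0 - 1"
    and "condI n \<mu> m \<nu> s (j0 - 1)" and "condI n \<mu> m \<nu> s (j0 + 1)"
  shows "\<bar>offset s\<bar> < l' (j0 - 1)"
proof -
  note nb = j0_neighbours[OF assms(1)]
  have "l (1 + a (j0 - 1)) < l' (j0 - 1) - offset s" using assms(3) condI_iff[OF nb(1)] by blast
  then have "l i0 < l' (j0 - 1) - offset s" unfolding assms(2) i0_indices(4) .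
  moreover have "l' (j0 + 1) - offset s < l (a (j0 + 1))" using assms(4) condI_iff[OF nb(2)] by blast
  then have "l' (j0 + 1) - offset s < l i0" unfolding apos_j0_succ[OF assms(1,2)] .
  ultimately show ?thesis using l_i0 nb(5) unfolding abs_less_iff by linarith
qed

theorem offset_le_L0_iff_exceptional_conditions:
  "\<bar>offset s\<bar> \<le> L0 n \<mu> m \<nu> \<longleftrightarrow>
     (\<forall>j\<in>{1..m}. j \<noteq> (m + 1) div 2 \<longrightarrow> condI n \<mu> m \<nu> s j) \<and>
     (if even (kjumps n \<mu> m \<nu>) then
        dualw n \<mu> ((n - 1) div 2) \<ge> lam n \<mu> m \<nu> ((m + 1) div 2) - s \<and>
        lam n \<mu> m \<nu> ((m + 1) div 2) - s \<ge> dualw n \<mu> ((n + 3) div 2) - 1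
      else
        lam n \<mu> m \<nu> ((m - 1) div 2) \<ge> dualw n \<mu> ((n + 1) div 2) + s \<and>
        dualw n \<mu> ((n + 1) div 2) + s \<ge> lam n \<mu> m \<nu> ((m + 3) div 2))"
proof (cases "even (kjumps n \<mu> m \<nu>)")
  case True
  then show ?thesis unfolding offset_le_L0_iff_exceptional even_middle_condition_iff by simp
next
  case False
  then have m3: "3 \<le> m" and middle: "a (j0 - 1) = i0 - 1" using odd_kjumps_middle by auto
  note nb = j0_neighbours[OF m3]
  have "j0 - 1 \<noteq> j0" "j0 + 1 \<noteq> j0" using nb(1) by auto
  then have "\<bar>offset s\<bar> < l' (j0 - 1)" if "\<forall>j\<in>{1..m}. j \<noteq> j0 \<longrightarrow> condI n \<mu> m \<nu> s j"
    using offset_bound_of_condI_j0_neighbours[OF m3 middle] that nb(1,2) by blast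
  moreover have "l' (j0 - 1) < l (i0 - 1)" using apos_gap(2)[OF nb(1)] middle by simp
  ultimately show ?thesis
    unfolding offset_le_L0_iff_exceptional odd_middle_condition_iff[OF m3 middle] using False by auto
qed

end

theorem proposition3p2:
  fixes n m :: nat and \<mu> \<nu> :: "nat \<Rightarrow> int" and t :: real and s :: int
  assumes "n \<ge> 1" and "m \<ge> 1" and "\<not> (n = 1 \<and> m = 1)"
    and "X0plus n \<mu>" and "X0plus m \<nu>"
    and "lt n \<mu> 1 > lt m \<nu> 1"
    and "\<forall>i\<in>{1..n}. \<forall>j\<in>{1..m}. lt n \<mu> i \<noteq> lt m \<nu> j \<or>
           (odd n \<and> odd m \<and> 2 * i = n + 1 \<and> 2 * j = m + 1)"
    and "t - (real m + real n) / 2 \<in> \<int>"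
    and "real_of_int s = t + (real n - real m) / 2 - 1"
  shows "(\<not> (odd n \<and> odd m) \<longrightarrow>
           (\<bar>t - kappa n \<mu> m \<nu>\<bar> < Lc n \<mu> m \<nu> + 1 / 2 \<longleftrightarrow>
            (\<forall>j\<in>{1..m}. condI n \<mu> m \<nu> s j)))
       \<and> (odd n \<and> odd m \<longrightarrow>
           (\<bar>t - kappa n \<mu> m \<nu>\<bar> < Lc n \<mu> m \<nu> + 1 / 2 \<longleftrightarrow>
            (\<forall>j\<in>{1..m}. j \<noteq> (m + 1) div 2 \<longrightarrow> condI n \<mu> m \<nu> s j) \<and>
            (if even (kjumps n \<mu> m \<nu>) then
               dualw n \<mu> ((n - 1) div 2) \<ge> lam n \<mu> m \<nu> ((m + 1) div 2) - s \<and>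
               lam n \<mu> m \<nu> ((m + 1) div 2) - s \<ge> dualw n \<mu> ((n + 3) div 2) - 1
             else
               lam n \<mu> m \<nu> ((m - 1) div 2) \<ge> dualw n \<mu> ((n + 1) div 2) + s \<and>
               dualw n \<mu> ((n + 1) div 2) + s \<ge> lam n \<mu> m \<nu> ((m + 3) div 2))))"
proof -
  interpret weight_pair n m \<mu> \<nu> using assms by unfold_locales auto
  have half_offset: "t - kappa n \<mu> m \<nu> = offset s / 2"
    using assms(9) unfolding kappa_def offset_def by (simp add: field_simps)
  have "\<bar>t - kappa n \<mu> m \<nu>\<bar> < Lc n \<mu> m \<nu> + 1 / 2 \<longleftrightarrow>
      real_of_int \<bar>offset s\<bar> < real_of_int (L0 n \<mu> m \<nu> + 1)"
    unfolding half_offset Lc_def by (simp add: field_simps)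
  also have "\<dots> \<longleftrightarrow> \<bar>offset s\<bar> < L0 n \<mu> m \<nu> + 1" by (rule of_int_less_iff)
  also have "\<dots> \<longleftrightarrow> \<bar>offset s\<bar> \<le> L0 n \<mu> m \<nu>" by linarith
  finally have critical: "\<bar>t - kappa n \<mu> m \<nu>\<bar> < Lc n \<mu> m \<nu> + 1 / 2 \<longleftrightarrow> \<bar>offset s\<bar> \<le> L0 n \<mu> m \<nu>" .
  have exceptional: "exceptional_pair n m \<mu> \<nu>" if "odd n \<and> odd m"
    using assms that by unfold_locales auto
  show ?thesis
    unfolding critical
    using offset_le_L0_iff_condI exceptional_pair.offset_le_L0_iff_exceptional_conditions[OF exceptional]
    by blast
qed

end
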